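(* Assume $h,\tau$ are such that $\int_0^T\int_{\mathcal D}\tilde Q_{h\tau}(t)\,dx\,dt>0$, and let $\rho>0$. For $V\in\mathbb U_{h\tau}$ define $$\mu(V)=\frac{\max\big\{\int_0^T\int_{\mathcal D}\mathbb E[X_{h\tau}(V)]\,dx\,dt-\delta,\,0\big\}}{\rho\int_0^T\int_{\mathcal D}\tilde Q_{h\tau}(t)\,dx\,dt},\qquad \mathbb R_hV:=V-\rho\,\mu(V)\,\tilde M_{h\tau}.$$ Then for every $V\in\mathbb U_{h\tau}$, $$\mathbb E\big[[V-\mathbb R_hV,\,W-\mathbb R_hV]\big]\le0\qquad\forall W\in\mathbb U_{h\tau,\delta},$$ and for all $V,P\in\mathbb U_{h\tau}$, $$\int_0^T\mathbb E\|\mathbb R_hV(t)-\mathbb R_hP(t)\|^2dt\le\int_0^T\mathbb E\|V(t)-P(t)\|^2dt.$$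
   Context: Setting: $T>0$; complete probability space with $\mathbb F=\{\mathcal F_t\}$ the natural filtration of a one-dimensional standard Brownian motion $W_t$; $\mathcal D\subset\mathbb R^d$ ($d=1,2,3$) bounded with smooth boundary; $\|\cdot\|$ the $L^2(\mathcal D)$ norm; $[U,V]=\int_0^T\int_{\mathcal D}UV\,dx\,dt$. Data $\delta\in\mathbb R$, $X_0\in L^2(\mathcal D)$, $\sigma$ adapted square-integrable $L^2(\mathcal D)$-valued. Finite elements: regular triangulation with mesh size $h$; $\mathbb V_h^1$ continuous piecewise linears vanishing on $\partial\mathcal D$; $\Pi^1_h$ the $L^2$-projection onto $\mathbb V^1_h$; $\Delta_h$ with $(-\Delta_h\xi_h,\phi_h)=(\nabla\xi_h,\nabla\phi_h)$. Time grid $t_n=n\tau$, $\tau=T/N\le1$, $\Delta W_{n+1}=W_{t_{n+1}}-W_{t_n}$. $\mathbb U_{h\tau}$: $\mathbb F$-adapted square-integrable $\mathbb V^1_h$-valued processes with $U(t)=U(t_n)$ on $[t_n,t_{n+1})$. For $V\in\mathbb U_{h\tau}$, $X_{h\tau}(V)$ is defined by $X(t_{n+1})-X(t_n)=\tau[\Delta_hX(t_{n+1})+V(t_n)]+\Pi^1_h\sigma(t_n)\Delta W_{n+1}$, $X(0)=\Pi^1_hX_0$, and $X(t)=\mathbb E[X(t_{n+1})|\mathcal F_{t_n}]$ for $t\in(t_n,t_{n+1})$. $\mathbb U_{h\tau,\delta}=\{V\in\mathbb U_{h\tau}:\int_0^T\int_{\mathcal D}\mathbb E[X_{h\tau}(V)]dxdt\le\delta\}$.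 Deterministic functions: $\tilde M_{h\tau}$ ($\mathbb V^1_h$-valued, $\tilde M(t)=\tilde M(t_n)$ on $[t_n,t_{n+1})$) solves $\tilde M_{h\tau}(t_{n+1})-\tilde M_{h\tau}(t_n)=\tau[-\Delta_h\tilde M_{h\tau}(t_n)-\Pi^1_h1]$, $\tilde M_{h\tau}(T)=0$; $\tilde Q_{h\tau}$ ($\mathbb V^1_h$-valued, $\tilde Q(t)=\tilde Q(t_{n+1})$ on $(t_n,t_{n+1}]$) solves $\tilde Q_{h\tau}(t_{n+1})-\tilde Q_{h\tau}(t_n)=\tau[\Delta_h\tilde Q_{h\tau}(t_{n+1})+\tilde M_{h\tau}(t_n)]$, $\tilde Q_{h\tau}(0)=0$. *)

theory Defs
  imports "HOL-Probability.Probability"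
begin

definition brownian_motion :: "'a measure \<Rightarrow> (real \<Rightarrow> 'a \<Rightarrow> real) \<Rightarrow> bool" where
  "brownian_motion M B \<longleftrightarrow> prob_space M \<and>
     (\<forall>t\<ge>0. B t \<in> borel_measurable M) \<and>
     (\<forall>\<omega>\<in>space M. B 0 \<omega> = 0) \<and>
     (\<forall>\<omega>\<in>space M. continuous_on {0..} (\<lambda>t. B t \<omega>)) \<and>
     (\<forall>s t. 0 \<le> s \<and> s < t \<longrightarrow>
        distributed M lborel (\<lambda>\<omega>. B t \<omega> - B s \<omega>) (normal_density 0 (sqrt (t - s)))) \<and>
     (\<forall>(ts::nat \<Rightarrow> real) k. 0 \<le> ts 0 \<and> (\<forall>i<k. ts i < ts (Suc i)) \<longrightarrow>
        prob_space.indep_vars M (\<lambda>_. borel) (\<lambda>i \<omega>. B (ts (Suc i)) \<omega> - B (ts i) \<omega>) {..<k})"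

definition nat_filtration :: "'a measure \<Rightarrow> (real \<Rightarrow> 'a \<Rightarrow> real) \<Rightarrow> real \<Rightarrow> 'a measure" where
  "nat_filtration M B t = sigma (space M)
     ((\<Union>s\<in>{0..t}. {B s -` A \<inter> space M | A. A \<in> sets borel}) \<union> null_sets M)"

definition vcond_exp :: "'a measure \<Rightarrow> 'a measure \<Rightarrow> ('a \<Rightarrow> 'v::euclidean_space) \<Rightarrow> 'a \<Rightarrow> 'v" where
  "vcond_exp M F Y = (\<lambda>\<omega>. \<Sum>b\<in>Basis. real_cond_exp M F (\<lambda>x. inner (Y x) b) \<omega> *\<^sub>R b)"

(* index n with t in [t_n, t_{n+1}) *)
definition tstep :: "real \<Rightarrow> real \<Rightarrow> nat" where
  "tstep \<tau> t = nat \<lfloor>t / \<tau>\<rfloor>"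

definition admissible :: "'a measure \<Rightarrow> (real \<Rightarrow> 'a \<Rightarrow> real) \<Rightarrow> real \<Rightarrow> nat \<Rightarrow> (real \<Rightarrow> 'a \<Rightarrow> 'v::euclidean_space) set" where
  "admissible M B T N = {U. \<forall>n<N.
      U (real n * (T / real N)) \<in> borel_measurable (nat_filtration M B (real n * (T / real N))) \<and>
      integrable M (\<lambda>\<omega>. (norm (U (real n * (T / real N)) \<omega>))\<^sup>2) \<and>
      (\<forall>t. real n * (T / real N) \<le> t \<and> t < real (Suc n) * (T / real N) \<longrightarrow>
             U t = U (real n * (T / real N)))}"

(* Discrete state X_{h tau}(V)(t_n); Lap = Delta_h, X0 = Pi_h X_0, S n = Pi_h sigma(t_n) *)
fun Xdisc :: "(real \<Rightarrow> 'a \<Rightarrow> real) \<Rightarrow> real \<Rightarrow> ('v::euclidean_space \<Rightarrow> 'v) \<Rightarrow> 'v \<Rightarrow> (nat \<Rightarrow> 'a \<Rightarrow> 'v)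
      \<Rightarrow> (real \<Rightarrow> 'a \<Rightarrow> 'v) \<Rightarrow> nat \<Rightarrow> 'a \<Rightarrow> 'v" where
  "Xdisc B \<tau> Lap X0 S V 0 \<omega> = X0"
| "Xdisc B \<tau> Lap X0 S V (Suc n) \<omega> =
     (THE y. y - Xdisc B \<tau> Lap X0 S V n \<omega> =
        \<tau> *\<^sub>R (Lap y + V (real n * \<tau>) \<omega>)
        + (B (real (Suc n) * \<tau>) \<omega> - B (real n * \<tau>) \<omega>) *\<^sub>R S n \<omega>)"

definition Xproc :: "'a measure \<Rightarrow> (real \<Rightarrow> 'a \<Rightarrow> real) \<Rightarrow> real \<Rightarrow> nat \<Rightarrow> ('v::euclidean_space \<Rightarrow> 'v) \<Rightarrow> 'v
      \<Rightarrow> (nat \<Rightarrow> 'a \<Rightarrow> 'v) \<Rightarrow> (real \<Rightarrow> 'a \<Rightarrow> 'v) \<Rightarrow> real \<Rightarrow> 'a \<Rightarrow> 'v" where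
  "Xproc M B T N Lap X0 S V t =
     (let \<tau> = T / real N; n = tstep \<tau> t in
      if t = real n * \<tau> then Xdisc B \<tau> Lap X0 S V n
      else vcond_exp M (nat_filtration M B (real n * \<tau>)) (Xdisc B \<tau> Lap X0 S V (Suc n)))"

(* int_0^T int_D E[X_{h tau}(V)] dx dt, with int_D xi dx = (xi, Pi_h 1) for xi in V_h *)
definition cost :: "'a measure \<Rightarrow> (real \<Rightarrow> 'a \<Rightarrow> real) \<Rightarrow> real \<Rightarrow> nat \<Rightarrow> ('v::euclidean_space \<Rightarrow> 'v) \<Rightarrow> 'v
      \<Rightarrow> 'v \<Rightarrow> (nat \<Rightarrow> 'a \<Rightarrow> 'v) \<Rightarrow> (real \<Rightarrow> 'a \<Rightarrow> 'v) \<Rightarrow> real" where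
  "cost M B T N Lap one X0 S V =
     integral {0..T} (\<lambda>t. inner (integral\<^sup>L M (Xproc M B T N Lap X0 S V t)) one)"

definition admissible_delta where
  "admissible_delta M B T N Lap one X0 S \<delta> =
     {V \<in> admissible M B T N. cost M B T N Lap one X0 S V \<le> \<delta>}"

(* tilde M: backward, Mback k = tilde M(t_{N-k}) *)
fun Mback :: "real \<Rightarrow> ('v::euclidean_space \<Rightarrow> 'v) \<Rightarrow> 'v \<Rightarrow> nat \<Rightarrow> 'v" where
  "Mback \<tau> Lap one 0 = 0"
| "Mback \<tau> Lap one (Suc k) = (THE y. Mback \<tau> Lap one k - y = \<tau> *\<^sub>R (- Lap y - one))"

definition Mdisc :: "real \<Rightarrow> nat \<Rightarrow> ('v::euclidean_space \<Rightarrow> 'v) \<Rightarrow> 'v \<Rightarrow> nat \<Rightarrow> 'v" where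
  "Mdisc T N Lap one n = Mback (T / real N) Lap one (N - n)"

definition Mtilde :: "real \<Rightarrow> nat \<Rightarrow> ('v::euclidean_space \<Rightarrow> 'v) \<Rightarrow> 'v \<Rightarrow> real \<Rightarrow> 'v" where
  "Mtilde T N Lap one t = Mdisc T N Lap one (tstep (T / real N) t)"

fun Qdisc :: "real \<Rightarrow> nat \<Rightarrow> ('v::euclidean_space \<Rightarrow> 'v) \<Rightarrow> 'v \<Rightarrow> nat \<Rightarrow> 'v" where
  "Qdisc T N Lap one 0 = 0"
| "Qdisc T N Lap one (Suc n) = (THE y. y - Qdisc T N Lap one n =
      (T / real N) *\<^sub>R (Lap y + Mdisc T N Lap one n))"

(* tilde Q(t) = tilde Q(t_{n+1}) on (t_n, t_{n+1}] *)
definition Qtilde :: "real \<Rightarrow> nat \<Rightarrow> ('v::euclidean_space \<Rightarrow> 'v) \<Rightarrow> 'v \<Rightarrow> real \<Rightarrow> 'v" where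
  "Qtilde T N Lap one t = Qdisc T N Lap one (nat \<lceil>t / (T / real N)\<rceil>) "

definition mu where
  "mu M B T N Lap one X0 S \<delta> \<rho> V =
     max (cost M B T N Lap one X0 S V - \<delta>) 0 /
       (\<rho> * integral {0..T} (\<lambda>t. inner (Qtilde T N Lap one t) one))"

definition Rh where
  "Rh M B T N Lap one X0 S \<delta> \<rho> V =
     (\<lambda>t \<omega>. V t \<omega> - (\<rho> * mu M B T N Lap one X0 S \<delta> \<rho> V) *\<^sub>R Mtilde T N Lap one t)"

end

theory Submission
  imports Defs
begin

text \<open>
  The constraint functional \<open>J(V) = \<integral>\<^sub>0\<^sup>T\<integral>\<^sub>D E[X\<^sub>h\<^sub>\<tau>(V)]\<close> is affine in \<open>V\<close>: the mean of
  the implicit Euler scheme satisfies a deterministic recursion with the self-adjoint step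
  operator \<open>I - \<tau>\<Delta>\<^sub>h\<close>, and summation by parts against the backward scheme for \<open>M\<^sub>h\<^sub>\<tau>\<close>
  shows that its gradient is \<open>M\<^sub>h\<^sub>\<tau>\<close>. The same duality applied to \<open>Q\<^sub>h\<^sub>\<tau>\<close> gives
  \<open>\<integral>\<^sub>0\<^sup>T\<integral>\<^sub>D Q\<^sub>h\<^sub>\<tau> = [M\<^sub>h\<^sub>\<tau>, M\<^sub>h\<^sub>\<tau>]\<close>. Hence the admissible set with \<open>J \<le> \<delta>\<close> is a
  half-space with normal \<open>M\<^sub>h\<^sub>\<tau>\<close> and \<open>R\<^sub>h\<close> is the orthogonal projection onto it, so both
  claims reduce to scalar inequalities for the multiplier \<open>max (J(V) - \<delta>) 0 / [M\<^sub>h\<^sub>\<tau>, M\<^sub>h\<^sub>\<tau>]\<close>.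
\<close>

lemma has_integral_grid_step:
  fixes f :: "real \<Rightarrow> 'b::banach" and c :: "nat \<Rightarrow> 'b"
  assumes tau: "\<tau> > 0"
    and step: "\<And>n t. n < K \<Longrightarrow> real n * \<tau> < t \<Longrightarrow> t < real (Suc n) * \<tau> \<Longrightarrow> f t = c n"
  shows "(f has_integral (\<Sum>n<K. \<tau> *\<^sub>R c n)) {0..real K * \<tau>}"
  using step
proof (induction K)
  case 0
  show ?case using has_integral_refl(2)[of f "0::real"] by simp
next
  case (Suc K)
  let ?a = "real K * \<tau>" and ?b = "real (Suc K) * \<tau>"
  have IH: "(f has_integral (\<Sum>n<K. \<tau> *\<^sub>R c n)) {0..?a}"
    using Suc by simp
  have le: "?a \<le> ?b" using tau by simp
  have const: "((\<lambda>x. c K) has_integral \<tau> *\<^sub>R c K) {?a..?b}"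
    using has_integral_const_real[of "c K" ?a ?b] le by (simp add: algebra_simps)
  have last: "(f has_integral \<tau> *\<^sub>R c K) {?a..?b}"
  proof (rule has_integral_spike_finite[OF _ _ const])
    show "finite {?a, ?b}" by simp
    show "f x = c K" if "x \<in> {?a..?b} - {?a, ?b}" for x
      using that Suc.prems[of K x] by auto
  qed
  show ?case using has_integral_combine[OF _ le IH last] tau by simp
qed

lemma integral_grid_step:
  fixes f :: "real \<Rightarrow> 'b::banach" and c :: "nat \<Rightarrow> 'b"
  assumes "\<tau> > 0"
    and "\<And>n t. n < K \<Longrightarrow> real n * \<tau> < t \<Longrightarrow> t < real (Suc n) * \<tau> \<Longrightarrow> f t = c n"
  shows "integral {0..real K * \<tau>} f = (\<Sum>n<K. \<tau> *\<^sub>R c n)"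
  using has_integral_grid_step[OF assms] by (rule integral_unique)

lemma tstep_eq:
  assumes "\<tau> > 0" "real n * \<tau> \<le> t" "t < real (Suc n) * \<tau>"
  shows "tstep \<tau> t = n"
proof -
  have "real n \<le> t / \<tau>" "t / \<tau> < real n + 1" using assms by (auto simp: field_simps)
  then have "\<lfloor>t / \<tau>\<rfloor> = int n" by (simp add: floor_eq_iff)
  then show ?thesis by (simp add: tstep_def)
qed

lemma nat_ceiling_divide_eq:
  assumes "\<tau> > 0" "real n * \<tau> < t" "t \<le> real (Suc n) * \<tau>"
  shows "nat \<lceil>t / \<tau>\<rceil> = Suc n"
proof -
  have "real n < t / \<tau>" "t / \<tau> \<le> real n + 1" using assms by (auto simp: field_simps)
  then have "\<lceil>t / \<tau>\<rceil> = int n + 1" by (simp add: ceiling_eq_iff)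
  then show ?thesis by simp
qed

lemma (in prob_space) integrable_of_square_integrable:
  fixes f :: "'a \<Rightarrow> 'b::{banach,second_countable_topology}"
  assumes f: "f \<in> borel_measurable M" and f2: "integrable M (\<lambda>x. (norm (f x))\<^sup>2)"
  shows "integrable M f"
proof (rule Bochner_Integration.integrable_bound[OF _ f AE_I2])
  show "integrable M (\<lambda>x. 1 + (norm (f x))\<^sup>2)" using f2 by simp
  have "u \<le> 1 + u\<^sup>2" for u :: real
    using zero_le_power2[of "u - 1"] by (simp add: power2_diff) (use zero_le_power2[of u] in linarith)
  then show "norm (f x) \<le> norm (1 + (norm (f x))\<^sup>2)" for x
    by (simp add: abs_of_nonneg add_nonneg_nonneg)
qed

lemma integrable_scaleR_of_square_integrable:
  fixes f :: "'a \<Rightarrow> real" and g :: "'a \<Rightarrow> 'b::{banach,second_countable_topology}"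
  assumes "f \<in> borel_measurable M" "g \<in> borel_measurable M"
    and "integrable M (\<lambda>x. (f x)\<^sup>2)" "integrable M (\<lambda>x. (norm (g x))\<^sup>2)"
  shows "integrable M (\<lambda>x. f x *\<^sub>R g x)"
proof (rule Bochner_Integration.integrable_bound[OF _ _ AE_I2])
  show "integrable M (\<lambda>x. (f x)\<^sup>2 + (norm (g x))\<^sup>2)" using assms by simp
  show "(\<lambda>x. f x *\<^sub>R g x) \<in> borel_measurable M" using assms by measurable
  have "\<bar>u\<bar> * v \<le> u\<^sup>2 + v\<^sup>2" for u v :: real
    using zero_le_power2[of "\<bar>u\<bar> - v"] by (simp add: power2_diff)
      (use zero_le_power2[of u] zero_le_power2[of v] in linarith)
  then show "norm (f x *\<^sub>R g x) \<le> norm ((f x)\<^sup>2 + (norm (g x))\<^sup>2)" for x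
    by simp
qed

lemma square_integrable_diff:
  fixes f g :: "'a \<Rightarrow> 'b::{banach,second_countable_topology}"
  assumes "f \<in> borel_measurable M" "g \<in> borel_measurable M"
    and "integrable M (\<lambda>x. (norm (f x))\<^sup>2)" "integrable M (\<lambda>x. (norm (g x))\<^sup>2)"
  shows "integrable M (\<lambda>x. (norm (f x - g x))\<^sup>2)"
proof (rule Bochner_Integration.integrable_bound[OF _ _ AE_I2])
  show "integrable M (\<lambda>x. 2 * (norm (f x))\<^sup>2 + 2 * (norm (g x))\<^sup>2)" using assms by simp
  show "(\<lambda>x. (norm (f x - g x))\<^sup>2) \<in> borel_measurable M" using assms by measurable
  have sq: "(u + v)\<^sup>2 \<le> 2 * u\<^sup>2 + 2 * v\<^sup>2" for u v :: real
    using zero_le_power2[of "u - v"] by (simp add: power2_diff power2_sum)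
  have "(norm (f x - g x))\<^sup>2 \<le> (norm (f x) + norm (g x))\<^sup>2" for x
    by (intro power_mono norm_triangle_ineq4) simp
  then have "(norm (f x - g x))\<^sup>2 \<le> 2 * (norm (f x))\<^sup>2 + 2 * (norm (g x))\<^sup>2" for x
    using sq[of "norm (f x)" "norm (g x)"] by (rule order_trans)
  then show "norm ((norm (f x - g x))\<^sup>2) \<le> norm (2 * (norm (f x))\<^sup>2 + 2 * (norm (g x))\<^sup>2)" for x
    by simp
qed

lemma (in prob_space) expectation_norm_diff_sq:
  fixes Y :: "'a \<Rightarrow> 'b::euclidean_space"
  assumes "integrable M Y" "integrable M (\<lambda>x. (norm (Y x))\<^sup>2)"
  shows "expectation (\<lambda>x. (norm (Y x - v))\<^sup>2)
    = expectation (\<lambda>x. (norm (Y x))\<^sup>2) - 2 * inner v (expectation Y) + (norm v)\<^sup>2"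
proof -
  have "(norm (y - v))\<^sup>2 = (norm y)\<^sup>2 - 2 * inner v y + (norm v)\<^sup>2" for y :: 'b
    by (simp add: power2_norm_eq_inner inner_diff_left inner_diff_right inner_commute)
  then show ?thesis using assms by (simp add: prob_space)
qed

lemma (in sigma_finite_subalgebra) integral_vcond_exp:
  fixes Y :: "'a \<Rightarrow> 'v::euclidean_space"
  assumes Y: "integrable M Y"
  shows "integral\<^sup>L M (vcond_exp M F Y) = integral\<^sup>L M Y"
proof -
  have Yb: "integrable M (\<lambda>x. inner (Y x) b)" for b using Y by simp
  have "integral\<^sup>L M (vcond_exp M F Y)
      = (\<Sum>b\<in>Basis. integral\<^sup>L M (\<lambda>x. real_cond_exp M F (\<lambda>x. inner (Y x) b) x) *\<^sub>R b)"
    unfolding vcond_exp_def using real_cond_exp_int(1)[OF Yb]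
    by (subst Bochner_Integration.integral_sum) (simp_all add: integrable_scaleR_left)
  also have "\<dots> = (\<Sum>b\<in>Basis. inner (integral\<^sup>L M Y) b *\<^sub>R b)"
    using real_cond_exp_int(2)[OF Yb] Y by simp
  also have "\<dots> = integral\<^sup>L M Y" by (rule euclidean_representation)
  finally show ?thesis .
qed

lemma subalgebra_nat_filtration:
  assumes "\<And>s. 0 \<le> s \<Longrightarrow> s \<le> t \<Longrightarrow> B s \<in> borel_measurable M"
  shows "subalgebra M (nat_filtration M B t)"
proof -
  let ?G = "(\<Union>s\<in>{0..t}. {B s -` A \<inter> space M | A. A \<in> sets borel}) \<union> null_sets M"
  have G: "?G \<subseteq> sets M"
  proof
    fix x assume "x \<in> ?G"
    then show "x \<in> sets M"
    proof
      assume "x \<in> (\<Union>s\<in>{0..t}. {B s -` A \<inter> space M | A. A \<in> sets borel})"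
      then obtain s A where "s \<in> {0..t}" "A \<in> sets borel" "x = B s -` A \<inter> space M" by blast
      then show ?thesis using assms[of s] by (auto simp: measurable_sets)
    qed auto
  qed
  then have "?G \<subseteq> Pow (space M)" using sets.sets_into_space by blast
  then have "sets (nat_filtration M B t) = sigma_sets (space M) ?G"
    "space (nat_filtration M B t) = space M"
    unfolding nat_filtration_def by (simp_all add: sets_measure_of space_measure_of_conv)
  then show ?thesis
    unfolding subalgebra_def using sets.sigma_sets_subset[OF G] by simp
qed

lemma brownian_increment_square_integrable:
  assumes BM: "brownian_motion M B" and "0 \<le> s" "s < t"
  shows "integrable M (\<lambda>\<omega>. (B t \<omega> - B s \<omega>)\<^sup>2)"
proof -
  have D: "distributed M lborel (\<lambda>\<omega>. B t \<omega> - B s \<omega>) (normal_density 0 (sqrt (t - s)))"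
    using BM assms unfolding brownian_motion_def by blast
  have "integrable lborel (\<lambda>x. normal_density 0 (sqrt (t - s)) x * x ^ 2)"
    using integrable_normal_moment[of "sqrt (t - s)" 0 2] \<open>s < t\<close> by simp
  then show ?thesis using distributed_integrable[OF D, of "\<lambda>x. x\<^sup>2"] by simp
qed

lemma halfspace_multiplier_variational:
  fixes a b \<delta> K :: real
  assumes "K > 0" "b \<le> \<delta>"
  defines "c \<equiv> max (a - \<delta>) 0 / K"
  shows "c * ((b - a) + c * K) \<le> 0"
proof (cases "a \<le> \<delta>")
  case False
  then have "c * K = a - \<delta>" "c \<ge> 0" using assms by (simp_all add: c_def)
  then have "c * ((b - a) + c * K) = c * (b - \<delta>)" by simp
  also have "\<dots> \<le> 0" using \<open>c \<ge> 0\<close> \<open>b \<le> \<delta>\<close> by (simp add: mult_nonneg_nonpos)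
  finally show ?thesis .
qed (simp add: c_def)

lemma halfspace_multiplier_nonexpansive:
  fixes a b \<delta> K :: real
  assumes K: "K > 0"
  defines "d \<equiv> max (a - \<delta>) 0 / K - max (b - \<delta>) 0 / K"
  shows "- 2 * d * (a - b) + d * d * K \<le> 0"
proof -
  define q where "q = max (a - \<delta>) 0 - max (b - \<delta>) 0"
  \<comment> \<open>\<open>s \<mapsto> max (s - \<delta>) 0\<close> is monotone and 1-Lipschitz\<close>
  have "(0 \<le> q \<and> q \<le> a - b) \<or> (a - b \<le> q \<and> q \<le> 0)" unfolding q_def by linarith
  then have "q * q \<le> q * (a - b)"
    by (auto intro: mult_left_mono mult_left_mono_neg)
  moreover have "q * (q - 2 * (a - b)) = q * q - 2 * (q * (a - b))" by (simp add: algebra_simps)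
  ultimately have "q * (q - 2 * (a - b)) \<le> 0" using zero_le_square[of q] by linarith
  moreover have "- 2 * d * (a - b) + d * d * K = q * (q - 2 * (a - b)) / K"
    using K by (simp add: d_def q_def diff_divide_distrib[symmetric] field_simps)
  ultimately show ?thesis using K by (simp add: divide_nonpos_pos)
qed

text \<open>The implicit steps are used in their solved form \<open>inv euler_op (\<dots>)\<close> instead of the
  \<open>THE\<close>-equations of the definitions.\<close>

declare Xdisc.simps(2) [simp del] Qdisc.simps(2) [simp del]

locale discrete_control_setting =
  fixes M :: "'a measure" and B :: "real \<Rightarrow> 'a \<Rightarrow> real"
    and T :: real and N :: nat
    and a :: "'v::euclidean_space \<Rightarrow> 'v \<Rightarrow> real" and Lap :: "'v \<Rightarrow> 'v" and one :: 'v
    and X0 :: 'v and S :: "nat \<Rightarrow> 'a \<Rightarrow> 'v"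
  assumes BM: "brownian_motion M B"
    and T: "T > 0" and N: "N > 0"
    and a_sym: "\<forall>x y. a x y = a y x"
    and a_pos: "\<forall>x. x \<noteq> 0 \<longrightarrow> a x x > 0"
    and Lap_lin: "linear Lap"
    and Lap_def: "\<forall>x y. inner (- Lap x) y = a x y"
    and S_adapted: "\<forall>n<N. S n \<in> borel_measurable (nat_filtration M B (real n * (T / real N)))
                        \<and> integrable M (\<lambda>\<omega>. (norm (S n \<omega>))\<^sup>2)"
begin

definition tau :: real where "tau = T / real N"

lemma tau_pos: "tau > 0" using T N by (simp add: tau_def)

lemma T_eq: "T = real N * tau" using N by (simp add: tau_def)

lemma integral_grid_0_T:
  fixes f :: "real \<Rightarrow> 'b::banach"
  assumes "\<And>n t. n < N \<Longrightarrow> real n * tau < t \<Longrightarrow> t < real (Suc n) * tau \<Longrightarrow> f t = c n"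
  shows "integral {0..T} f = (\<Sum>n<N. tau *\<^sub>R c n)"
proof -
  have "integral {0..real N * tau} f = (\<Sum>n<N. tau *\<^sub>R c n)"
    by (rule integral_grid_step[OF tau_pos]) (rule assms)
  then show ?thesis by (simp only: T_eq[symmetric])
qed

subsection \<open>The implicit Euler step operator\<close>

definition euler_op :: "'v \<Rightarrow> 'v" where "euler_op y = y - tau *\<^sub>R Lap y"

lemma linear_euler_op: "linear euler_op"
  by (rule linearI)
     (auto simp: euler_op_def linear_add[OF Lap_lin] linear_scale[OF Lap_lin] algebra_simps)

lemma inner_Lap: "inner (Lap x) y = - a x y"
  using Lap_def by (metis inner_minus_left minus_minus)

lemma euler_op_self_adjoint: "inner (euler_op x) y = inner x (euler_op y)"
  using inner_Lap a_sym
  by (simp add: euler_op_def inner_diff_left inner_diff_right inner_commute[of x "Lap y"])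

lemma inj_euler_op: "inj euler_op"
proof -
  have "y = 0" if "euler_op y = 0" for y
  proof (rule ccontr)
    assume "y \<noteq> 0"
    then have "0 < inner y y + tau * a y y" using a_pos tau_pos by (simp add: add_pos_pos)
    also have "\<dots> = inner (euler_op y) y" using inner_Lap by (simp add: euler_op_def inner_diff_left)
    finally show False using that by simp
  qed
  then show ?thesis using linear_euler_op by (simp add: linear_inj_iff_eq_0)
qed

lemma surj_euler_op: "surj euler_op"
  using linear_euler_op inj_euler_op linear_injective_imp_surjective by blast

lemma euler_op_inv [simp]: "euler_op (inv euler_op z) = z"
  using surj_euler_op by (rule surj_f_inv_f)

lemma bounded_linear_euler_op: "bounded_linear euler_op"
  using linear_euler_op linear_conv_bounded_linear by blast

lemma bounded_linear_inv_euler_op: "bounded_linear (inv euler_op)"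
  using inj_linear_imp_inv_bounded_linear bounded_linear_euler_op inj_euler_op by blast

lemma the_euler_op_eq: "(THE y. euler_op y = z) = inv euler_op z"
  by (rule the_equality) (auto simp: inv_f_f[OF inj_euler_op])

lemma the_implicit_step:
  "(THE y. y - x = tau *\<^sub>R (Lap y + v) + w) = inv euler_op (x + tau *\<^sub>R v + w)"
proof -
  have "(\<lambda>y. y - x = tau *\<^sub>R (Lap y + v) + w) = (\<lambda>y. euler_op y = x + tau *\<^sub>R v + w)"
    by (rule ext) (auto simp: euler_op_def algebra_simps)
  then show ?thesis by (simp add: the_euler_op_eq)
qed

lemma the_backward_step:
  "(THE y. x - y = tau *\<^sub>R (- Lap y - v)) = inv euler_op (x + tau *\<^sub>R v)"
proof -
  have "(\<lambda>y. x - y = tau *\<^sub>R (- Lap y - v)) = (\<lambda>y. euler_op y = x + tau *\<^sub>R v)"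
    by (rule ext) (auto simp: euler_op_def algebra_simps)
  then show ?thesis by (simp add: the_euler_op_eq)
qed

abbreviation X :: "(real \<Rightarrow> 'a \<Rightarrow> 'v) \<Rightarrow> nat \<Rightarrow> 'a \<Rightarrow> 'v" where
  "X V n \<equiv> Xdisc B tau Lap X0 S V n"

abbreviation Mh :: "nat \<Rightarrow> 'v" where "Mh n \<equiv> Mdisc T N Lap one n"

abbreviation Qh :: "nat \<Rightarrow> 'v" where "Qh n \<equiv> Qdisc T N Lap one n"

definition dW :: "nat \<Rightarrow> 'a \<Rightarrow> real" where
  "dW n \<omega> = B (real (Suc n) * tau) \<omega> - B (real n * tau) \<omega>"

lemma X_Suc:
  "X V (Suc n) \<omega> = inv euler_op (X V n \<omega> + tau *\<^sub>R V (real n * tau) \<omega> + dW n \<omega> *\<^sub>R S n \<omega>)"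
  by (simp only: Xdisc.simps the_implicit_step dW_def)

lemma euler_op_Mh:
  assumes "n < N"
  shows "euler_op (Mh n) = Mh (Suc n) + tau *\<^sub>R one"
proof -
  have "N - n = Suc (N - Suc n)" using assms by simp
  then show ?thesis
    by (simp only: Mdisc_def Mback.simps tau_def[symmetric] the_backward_step euler_op_inv)
qed

lemma euler_op_Qh_Suc: "euler_op (Qh (Suc n)) = Qh n + tau *\<^sub>R Mh n"
  using the_implicit_step[of "Qh n" "Mh n" 0] by (simp add: Qdisc.simps(2) tau_def[symmetric])

text \<open>The boundary terms of the summation by parts vanish because \<open>e 0 = 0\<close> and \<open>Mh N = 0\<close>.\<close>

lemma sum_by_parts_Mh:
  assumes e: "\<And>n. n < N \<Longrightarrow> euler_op (e (Suc n)) = e n + tau *\<^sub>R u n" and e0: "e 0 = 0"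
  shows "(\<Sum>n<N. tau * inner (e (Suc n)) one) = (\<Sum>n<N. tau * inner (Mh n) (u n))"
proof -
  let ?g = "\<lambda>n. inner (Mh n) (e n)"
  have "tau * inner (Mh n) (u n) = (?g (Suc n) - ?g n) + tau * inner (e (Suc n)) one"
    if n: "n < N" for n
  proof -
    have "tau * inner (Mh n) (u n) = inner (Mh n) (euler_op (e (Suc n)) - e n)"
      using e[OF n] by simp
    also have "\<dots> = inner (euler_op (Mh n)) (e (Suc n)) - ?g n"
      by (simp add: inner_diff_right euler_op_self_adjoint)
    also have "\<dots> = (?g (Suc n) - ?g n) + tau * inner (e (Suc n)) one"
      by (simp add: euler_op_Mh[OF n] inner_add_left inner_commute[of one])
    finally show ?thesis .
  qed
  then have "(\<Sum>n<N. tau * inner (Mh n) (u n))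
      = (\<Sum>n<N. ?g (Suc n) - ?g n) + (\<Sum>n<N. tau * inner (e (Suc n)) one)"
    by (simp add: sum.distrib)
  also have "(\<Sum>n<N. ?g (Suc n) - ?g n) = 0"
    using e0 by (simp only: sum_lessThan_telescope[of ?g N]) (simp add: Mdisc_def)
  finally show ?thesis by simp
qed

subsection \<open>Means of the state and the constraint functional\<close>

lemma prob_space_M: "prob_space M" using BM by (simp add: brownian_motion_def)

lemma B_measurable: "t \<ge> 0 \<Longrightarrow> B t \<in> borel_measurable M"
  using BM by (simp add: brownian_motion_def)

lemma sigma_finite_subalgebra_nat_filtration:
  assumes "t \<ge> 0"
  shows "sigma_finite_subalgebra M (nat_filtration M B t)"
proof -
  have "subalgebra M (nat_filtration M B t)"
    by (rule subalgebra_nat_filtration) (rule B_measurable)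
  then have "finite_measure_subalgebra M (nat_filtration M B t)"
    using prob_space_M by (simp add: finite_measure_subalgebra_def finite_measure_subalgebra_axioms_def
        prob_space_def)
  then show ?thesis by (rule finite_measure_subalgebra_is_sigma_finite)
qed

lemma measurable_nat_filtration:
  "t \<ge> 0 \<Longrightarrow> f \<in> borel_measurable (nat_filtration M B t) \<Longrightarrow> f \<in> borel_measurable M"
  using measurable_from_subalg sigma_finite_subalgebra_nat_filtration
  by (blast dest: sigma_finite_subalgebra.subalg)

lemma admissibleD:
  assumes "V \<in> admissible M B T N" "n < N"
  shows "V (real n * tau) \<in> borel_measurable M"
    and "integrable M (\<lambda>\<omega>. (norm (V (real n * tau) \<omega>))\<^sup>2)"
    and "integrable M (V (real n * tau))"
proof -
  have F: "V (real n * tau) \<in> borel_measurable (nat_filtration M B (real n * tau))"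
    and sq: "integrable M (\<lambda>\<omega>. (norm (V (real n * tau) \<omega>))\<^sup>2)"
    using assms unfolding admissible_def tau_def by blast+
  show meas: "V (real n * tau) \<in> borel_measurable M"
    using measurable_nat_filtration[OF _ F] tau_pos by simp
  show "integrable M (\<lambda>\<omega>. (norm (V (real n * tau) \<omega>))\<^sup>2)" by (fact sq)
  show "integrable M (V (real n * tau))"
    using prob_space.integrable_of_square_integrable[OF prob_space_M meas sq] .
qed

lemma admissible_eq_on_grid_interval:
  assumes "V \<in> admissible M B T N" "n < N" "real n * tau < t" "t < real (Suc n) * tau"
  shows "V t = V (real n * tau)"
proof -
  have "\<forall>t. real n * tau \<le> t \<and> t < real (Suc n) * tau \<longrightarrow> V t = V (real n * tau)"
    using assms(1,2) unfolding admissible_def tau_def by blast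
  then show ?thesis using assms(3,4) less_imp_le by blast
qed

lemma integrable_noise:
  assumes n: "n < N"
  shows "integrable M (\<lambda>\<omega>. dW n \<omega> *\<^sub>R S n \<omega>)"
proof (rule integrable_scaleR_of_square_integrable)
  have grid: "0 \<le> real n * tau" "real n * tau < real (Suc n) * tau" using tau_pos by simp_all
  show "dW n \<in> borel_measurable M"
    unfolding dW_def using B_measurable grid by (intro borel_measurable_diff) simp_all
  have "S n \<in> borel_measurable (nat_filtration M B (real n * tau))"
    using S_adapted n unfolding tau_def by blast
  then show "S n \<in> borel_measurable M"
    using measurable_nat_filtration grid(1) by blast
  show "integrable M (\<lambda>\<omega>. (dW n \<omega>)\<^sup>2)"
    unfolding dW_def using brownian_increment_square_integrable[OF BM grid] .
  show "integrable M (\<lambda>\<omega>. (norm (S n \<omega>))\<^sup>2)" using S_adapted n by blast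
qed

lemma integrable_X:
  assumes V: "V \<in> admissible M B T N"
  shows "n \<le> N \<Longrightarrow> integrable M (X V n)"
proof (induction n)
  case 0
  interpret prob_space M by (rule prob_space_M)
  show ?case by simp
next
  case (Suc n)
  then have n: "n < N" by simp
  have "integrable M (\<lambda>\<omega>. X V n \<omega> + tau *\<^sub>R V (real n * tau) \<omega> + dW n \<omega> *\<^sub>R S n \<omega>)"
    using Suc admissibleD(3)[OF V n] integrable_noise[OF n] by simp
  then show ?case
    unfolding X_Suc by (rule integrable_bounded_linear[OF bounded_linear_inv_euler_op])
qed

lemma euler_op_mean_X_Suc:
  assumes V: "V \<in> admissible M B T N" and n: "n < N"
  shows "euler_op (integral\<^sup>L M (X V (Suc n)))
    = integral\<^sup>L M (X V n) + tau *\<^sub>R integral\<^sup>L M (V (real n * tau))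
      + integral\<^sup>L M (\<lambda>\<omega>. dW n \<omega> *\<^sub>R S n \<omega>)"
proof -
  have "euler_op (integral\<^sup>L M (X V (Suc n))) = integral\<^sup>L M (\<lambda>\<omega>. euler_op (X V (Suc n) \<omega>))"
    using integral_bounded_linear[OF bounded_linear_euler_op integrable_X[OF V]] n by simp
  also have "\<dots> = integral\<^sup>L M (\<lambda>\<omega>. X V n \<omega> + tau *\<^sub>R V (real n * tau) \<omega> + dW n \<omega> *\<^sub>R S n \<omega>)"
    by (simp only: X_Suc euler_op_inv)
  also have "\<dots> = integral\<^sup>L M (X V n) + tau *\<^sub>R integral\<^sup>L M (V (real n * tau))
      + integral\<^sup>L M (\<lambda>\<omega>. dW n \<omega> *\<^sub>R S n \<omega>)"
    using integrable_X[OF V, of n] admissibleD(3)[OF V n] integrable_noise[OF n] n by simp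
  finally show ?thesis .
qed

abbreviation J :: "(real \<Rightarrow> 'a \<Rightarrow> 'v) \<Rightarrow> real" where
  "J V \<equiv> cost M B T N Lap one X0 S V"

lemma cost_eq_sum:
  assumes V: "V \<in> admissible M B T N"
  shows "J V = (\<Sum>n<N. tau * inner (integral\<^sup>L M (X V (Suc n))) one)"
proof -
  have "inner (integral\<^sup>L M (Xproc M B T N Lap X0 S V t)) one = inner (integral\<^sup>L M (X V (Suc n))) one"
    if n: "n < N" and t: "real n * tau < t" "t < real (Suc n) * tau" for n t
  proof -
    have "Xproc M B T N Lap X0 S V t = vcond_exp M (nat_filtration M B (real n * tau)) (X V (Suc n))"
      using t tstep_eq[OF tau_pos _ t(2)] by (simp add: Xproc_def tau_def[symmetric] Let_def)
    moreover have "integral\<^sup>L M (vcond_exp M (nat_filtration M B (real n * tau)) (X V (Suc n)))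
        = integral\<^sup>L M (X V (Suc n))"
      using tau_pos integrable_X[OF V, of "Suc n"] n
      by (intro sigma_finite_subalgebra.integral_vcond_exp sigma_finite_subalgebra_nat_filtration) simp_all
    ultimately show ?thesis by simp
  qed
  from integral_grid_0_T[OF this] show ?thesis by (simp add: cost_def)
qed

abbreviation EV :: "(real \<Rightarrow> 'a \<Rightarrow> 'v) \<Rightarrow> nat \<Rightarrow> 'v" where
  "EV V n \<equiv> integral\<^sup>L M (V (real n * tau))"

text \<open>The noise terms and the initial values cancel, so the constraint is affine with gradient \<open>M\<^sub>h\<^sub>\<tau>\<close>.\<close>

lemma cost_diff:
  assumes V: "V \<in> admissible M B T N" and P: "P \<in> admissible M B T N"
  shows "J V - J P = (\<Sum>n<N. tau * inner (Mh n) (EV V n - EV P n))"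
proof -
  let ?e = "\<lambda>n. integral\<^sup>L M (X V n) - integral\<^sup>L M (X P n)"
  have "J V - J P = (\<Sum>n<N. tau * inner (?e (Suc n)) one)"
    unfolding cost_eq_sum[OF V] cost_eq_sum[OF P]
    by (simp add: sum_subtractf[symmetric] inner_diff_left algebra_simps)
  also have "\<dots> = (\<Sum>n<N. tau * inner (Mh n) (EV V n - EV P n))"
  proof (rule sum_by_parts_Mh)
    fix n assume n: "n < N"
    have "euler_op (?e (Suc n))
        = euler_op (integral\<^sup>L M (X V (Suc n))) - euler_op (integral\<^sup>L M (X P (Suc n)))"
      by (rule linear_diff[OF linear_euler_op])
    also have "\<dots> = ?e n + tau *\<^sub>R (EV V n - EV P n)"
      unfolding euler_op_mean_X_Suc[OF V n] euler_op_mean_X_Suc[OF P n] by (simp add: algebra_simps)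
    finally show "euler_op (?e (Suc n)) = ?e n + tau *\<^sub>R (EV V n - EV P n)" .
  qed (simp add: prob_space.prob_space[OF prob_space_M])
  finally show ?thesis .
qed

definition Qint :: real where "Qint = integral {0..T} (\<lambda>t. inner (Qtilde T N Lap one t) one)"

lemma Qint_eq_sum_Mh: "Qint = (\<Sum>n<N. tau * inner (Mh n) (Mh n))"
proof -
  have "inner (Qtilde T N Lap one t) one = inner (Qh (Suc n)) one"
    if "real n * tau < t" "t < real (Suc n) * tau" for n t
    using nat_ceiling_divide_eq[OF tau_pos that(1)] that(2) by (simp add: Qtilde_def tau_def[symmetric])
  from integral_grid_0_T[OF this] have "Qint = (\<Sum>n<N. tau * inner (Qh (Suc n)) one)"
    by (simp add: Qint_def)
  also have "\<dots> = (\<Sum>n<N. tau * inner (Mh n) (Mh n))"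
    by (rule sum_by_parts_Mh) (simp_all add: euler_op_Qh_Suc)
  finally show ?thesis .
qed

subsection \<open>\<open>R\<^sub>h\<close> is the projection onto the half-space\<close>

abbreviation R :: "real \<Rightarrow> real \<Rightarrow> (real \<Rightarrow> 'a \<Rightarrow> 'v) \<Rightarrow> real \<Rightarrow> 'a \<Rightarrow> 'v" where
  "R \<delta> \<rho> V \<equiv> Rh M B T N Lap one X0 S \<delta> \<rho> V"

definition multiplier :: "real \<Rightarrow> (real \<Rightarrow> 'a \<Rightarrow> 'v) \<Rightarrow> real" where
  "multiplier \<delta> V = max (J V - \<delta>) 0 / Qint"

lemma Rh_grid:
  assumes "\<rho> > 0" "real n * tau \<le> t" "t < real (Suc n) * tau"
  shows "R \<delta> \<rho> V t \<omega> = V t \<omega> - multiplier \<delta> V *\<^sub>R Mh n"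
  using assms tstep_eq[OF tau_pos]
  by (simp add: Rh_def mu_def multiplier_def Qint_def[symmetric] Mtilde_def tau_def[symmetric])

lemma integral_inner_residual_Rh:
  assumes rho: "\<rho> > 0" and V: "V \<in> admissible M B T N" and W: "W \<in> admissible M B T N"
  shows "integral {0..T} (\<lambda>t. inner (V t \<omega> - R \<delta> \<rho> V t \<omega>) (W t \<omega> - R \<delta> \<rho> V t \<omega>))
    = (\<Sum>n<N. tau * inner (multiplier \<delta> V *\<^sub>R Mh n)
        (W (real n * tau) \<omega> - V (real n * tau) \<omega> + multiplier \<delta> V *\<^sub>R Mh n))"
proof -
  have "inner (V t \<omega> - R \<delta> \<rho> V t \<omega>) (W t \<omega> - R \<delta> \<rho> V t \<omega>)
      = inner (multiplier \<delta> V *\<^sub>R Mh n)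
          (W (real n * tau) \<omega> - V (real n * tau) \<omega> + multiplier \<delta> V *\<^sub>R Mh n)"
    if n: "n < N" and t: "real n * tau < t" "t < real (Suc n) * tau" for n t
  proof -
    have "V t = V (real n * tau)" "W t = W (real n * tau)"
      using admissible_eq_on_grid_interval[OF V n t] admissible_eq_on_grid_interval[OF W n t]
      by simp_all
    moreover have "R \<delta> \<rho> V t \<omega> = V t \<omega> - multiplier \<delta> V *\<^sub>R Mh n"
      using Rh_grid[OF rho, of n t] t by simp
    ultimately show ?thesis by (simp add: diff_diff_eq2 diff_add_eq)
  qed
  from integral_grid_0_T[OF this] show ?thesis by simp
qed

lemma integral_norm_diff_Rh:
  assumes rho: "\<rho> > 0" and V: "V \<in> admissible M B T N" and P: "P \<in> admissible M B T N"
  shows "integral {0..T} (\<lambda>t. integral\<^sup>L M (\<lambda>\<omega>. (norm (R \<delta> \<rho> V t \<omega> - R \<delta> \<rho> P t \<omega>))\<^sup>2))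
    = (\<Sum>n<N. tau * integral\<^sup>L M (\<lambda>\<omega>. (norm (V (real n * tau) \<omega> - P (real n * tau) \<omega>
        - (multiplier \<delta> V - multiplier \<delta> P) *\<^sub>R Mh n))\<^sup>2))"
proof -
  have "integral\<^sup>L M (\<lambda>\<omega>. (norm (R \<delta> \<rho> V t \<omega> - R \<delta> \<rho> P t \<omega>))\<^sup>2)
      = integral\<^sup>L M (\<lambda>\<omega>. (norm (V (real n * tau) \<omega> - P (real n * tau) \<omega>
          - (multiplier \<delta> V - multiplier \<delta> P) *\<^sub>R Mh n))\<^sup>2)"
    if n: "n < N" and t: "real n * tau < t" "t < real (Suc n) * tau" for n t
  proof -
    have "R \<delta> \<rho> V t \<omega> - R \<delta> \<rho> P t \<omega> = V (real n * tau) \<omega> - P (real n * tau) \<omega>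
        - (multiplier \<delta> V - multiplier \<delta> P) *\<^sub>R Mh n" for \<omega>
      using Rh_grid[OF rho, of n t] admissible_eq_on_grid_interval[OF V n t]
        admissible_eq_on_grid_interval[OF P n t] t
      by (simp add: algebra_simps)
    then show ?thesis by simp
  qed
  from integral_grid_0_T[OF this] show ?thesis by simp
qed

lemma integral_norm_diff_admissible:
  assumes V: "V \<in> admissible M B T N" and P: "P \<in> admissible M B T N"
  shows "integral {0..T} (\<lambda>t. integral\<^sup>L M (\<lambda>\<omega>. (norm (V t \<omega> - P t \<omega>))\<^sup>2))
    = (\<Sum>n<N. tau * integral\<^sup>L M (\<lambda>\<omega>. (norm (V (real n * tau) \<omega> - P (real n * tau) \<omega>))\<^sup>2))"
proof -
  have "integral\<^sup>L M (\<lambda>\<omega>. (norm (V t \<omega> - P t \<omega>))\<^sup>2)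
      = integral\<^sup>L M (\<lambda>\<omega>. (norm (V (real n * tau) \<omega> - P (real n * tau) \<omega>))\<^sup>2)"
    if n: "n < N" and t: "real n * tau < t" "t < real (Suc n) * tau" for n t
    using admissible_eq_on_grid_interval[OF V n t] admissible_eq_on_grid_interval[OF P n t] by simp
  from integral_grid_0_T[OF this] show ?thesis by simp
qed

lemma Rh_variational_inequality:
  assumes rho: "\<rho> > 0" and Qint_pos: "Qint > 0"
    and V: "V \<in> admissible M B T N" and W: "W \<in> admissible M B T N" and JW: "J W \<le> \<delta>"
  shows "integral\<^sup>L M (\<lambda>\<omega>. integral {0..T} (\<lambda>t.
           inner (V t \<omega> - R \<delta> \<rho> V t \<omega>) (W t \<omega> - R \<delta> \<rho> V t \<omega>))) \<le> 0"
proof -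
  interpret prob_space M by (rule prob_space_M)
  let ?c = "multiplier \<delta> V"
  let ?f = "\<lambda>n \<omega>. tau * inner (?c *\<^sub>R Mh n) (W (real n * tau) \<omega> - V (real n * tau) \<omega> + ?c *\<^sub>R Mh n)"
  have int: "integrable M (?f n)"
    and mean: "expectation (?f n)
      = ?c * (tau * inner (Mh n) (EV W n - EV V n)) + ?c * ?c * (tau * inner (Mh n) (Mh n))"
    if n: "n < N" for n
    using admissibleD(3)[OF W n] admissibleD(3)[OF V n]
    by (simp_all add: prob_space inner_add_right inner_diff_right algebra_simps)
  have "expectation (\<lambda>\<omega>. integral {0..T} (\<lambda>t.
           inner (V t \<omega> - R \<delta> \<rho> V t \<omega>) (W t \<omega> - R \<delta> \<rho> V t \<omega>)))
      = (\<Sum>n<N. expectation (?f n))"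
    unfolding integral_inner_residual_Rh[OF rho V W]
    by (rule Bochner_Integration.integral_sum) (rule int, simp)
  also have "\<dots> = (\<Sum>n<N. ?c * (tau * inner (Mh n) (EV W n - EV V n))
      + ?c * ?c * (tau * inner (Mh n) (Mh n)))"
    by (rule sum.cong[OF refl]) (simp only: lessThan_iff mean)
  also have "\<dots> = ?c * (\<Sum>n<N. tau * inner (Mh n) (EV W n - EV V n))
      + ?c * ?c * (\<Sum>n<N. tau * inner (Mh n) (Mh n))"
    by (simp only: sum.distrib sum_distrib_left)
  also have "\<dots> = ?c * ((J W - J V) + ?c * Qint)"
    unfolding cost_diff[OF W V] Qint_eq_sum_Mh by (simp add: algebra_simps)
  also have "\<dots> \<le> 0"
    unfolding multiplier_def by (rule halfspace_multiplier_variational[OF Qint_pos JW])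
  finally show ?thesis .
qed

lemma Rh_nonexpansive:
  assumes rho: "\<rho> > 0" and Qint_pos: "Qint > 0"
    and V: "V \<in> admissible M B T N" and P: "P \<in> admissible M B T N"
  shows "integral {0..T} (\<lambda>t. integral\<^sup>L M (\<lambda>\<omega>. (norm (R \<delta> \<rho> V t \<omega> - R \<delta> \<rho> P t \<omega>))\<^sup>2))
      \<le> integral {0..T} (\<lambda>t. integral\<^sup>L M (\<lambda>\<omega>. (norm (V t \<omega> - P t \<omega>))\<^sup>2))"
proof -
  interpret prob_space M by (rule prob_space_M)
  let ?d = "multiplier \<delta> V - multiplier \<delta> P"
  let ?D = "\<lambda>n \<omega>. V (real n * tau) \<omega> - P (real n * tau) \<omega>"
  let ?E2 = "\<lambda>n. expectation (\<lambda>\<omega>. (norm (?D n \<omega>))\<^sup>2)"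
  have ring: "tau * (e - 2 * (d * x) + d * d * y) = tau * e + (- 2 * d * (tau * x) + d * d * (tau * y))"
    for e d x y :: real
    by (simp add: algebra_simps)
  have expand: "tau * expectation (\<lambda>\<omega>. (norm (?D n \<omega> - ?d *\<^sub>R Mh n))\<^sup>2)
      = tau * ?E2 n + (- 2 * ?d * (tau * inner (Mh n) (EV V n - EV P n))
        + ?d * ?d * (tau * inner (Mh n) (Mh n)))"
    if n: "n < N" for n
  proof -
    have "integrable M (\<lambda>\<omega>. (norm (?D n \<omega>))\<^sup>2)"
      using square_integrable_diff admissibleD(1,2)[OF V n] admissibleD(1,2)[OF P n] by blast
    then have "expectation (\<lambda>\<omega>. (norm (?D n \<omega> - ?d *\<^sub>R Mh n))\<^sup>2)
        = ?E2 n - 2 * inner (?d *\<^sub>R Mh n) (EV V n - EV P n) + (norm (?d *\<^sub>R Mh n))\<^sup>2"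
      using admissibleD(3)[OF V n] admissibleD(3)[OF P n] by (simp add: expectation_norm_diff_sq)
    also have "\<dots> = ?E2 n - 2 * (?d * inner (Mh n) (EV V n - EV P n)) + ?d * ?d * inner (Mh n) (Mh n)"
      by (simp only: power2_norm_eq_inner inner_scaleR_left inner_scaleR_right mult.assoc)
    finally have E: "expectation (\<lambda>\<omega>. (norm (?D n \<omega> - ?d *\<^sub>R Mh n))\<^sup>2)
        = ?E2 n - 2 * (?d * inner (Mh n) (EV V n - EV P n)) + ?d * ?d * inner (Mh n) (Mh n)" .
    show ?thesis unfolding E by (rule ring)
  qed
  have "integral {0..T} (\<lambda>t. integral\<^sup>L M (\<lambda>\<omega>. (norm (R \<delta> \<rho> V t \<omega> - R \<delta> \<rho> P t \<omega>))\<^sup>2))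
      = (\<Sum>n<N. tau * ?E2 n + (- 2 * ?d * (tau * inner (Mh n) (EV V n - EV P n))
        + ?d * ?d * (tau * inner (Mh n) (Mh n))))"
    unfolding integral_norm_diff_Rh[OF rho V P]
    by (rule sum.cong[OF refl]) (simp only: lessThan_iff expand)
  also have "\<dots> = (\<Sum>n<N. tau * ?E2 n) + (- 2 * ?d * (\<Sum>n<N. tau * inner (Mh n) (EV V n - EV P n))
        + ?d * ?d * (\<Sum>n<N. tau * inner (Mh n) (Mh n)))"
    by (simp only: sum.distrib sum_distrib_left)
  also have "\<dots> = (\<Sum>n<N. tau * ?E2 n) + (- 2 * ?d * (J V - J P) + ?d * ?d * Qint)"
    unfolding cost_diff[OF V P] Qint_eq_sum_Mh ..
  also have "\<dots> \<le> (\<Sum>n<N. tau * ?E2 n)"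
    using halfspace_multiplier_nonexpansive[OF Qint_pos, of "J V" \<delta> "J P"]
    by (simp add: multiplier_def)
  also have "\<dots> = integral {0..T} (\<lambda>t. integral\<^sup>L M (\<lambda>\<omega>. (norm (V t \<omega> - P t \<omega>))\<^sup>2))"
    by (rule integral_norm_diff_admissible[OF V P, symmetric])
  finally show ?thesis .
qed

end

theorem mainTheorem8:
  fixes M :: "'a measure" and B :: "real \<Rightarrow> 'a \<Rightarrow> real"
    and T \<delta> \<rho> :: real and N :: nat
    and a :: "'v::euclidean_space \<Rightarrow> 'v \<Rightarrow> real" and Lap :: "'v \<Rightarrow> 'v" and one :: 'v
    and X0 :: 'v and S :: "nat \<Rightarrow> 'a \<Rightarrow> 'v"
  assumes complete: "\<forall>A0\<in>null_sets M. \<forall>A. A \<subseteq> A0 \<longrightarrow> A \<in> sets M"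
    and BM: "brownian_motion M B"
    and T: "T > 0" and N: "N > 0" and tau: "T / real N \<le> 1"
    and a_sym: "\<forall>x y. a x y = a y x"
    and a_pos: "\<forall>x. x \<noteq> 0 \<longrightarrow> a x x > 0"
    and Lap_lin: "linear Lap"
    and Lap_def: "\<forall>x y. inner (- Lap x) y = a x y"
    and S_adapted: "\<forall>n<N. S n \<in> borel_measurable (nat_filtration M B (real n * (T / real N)))
                        \<and> integrable M (\<lambda>\<omega>. (norm (S n \<omega>))\<^sup>2)"
    and Qpos: "integral {0..T} (\<lambda>t. inner (Qtilde T N Lap one t) one) > 0"
    and rho: "\<rho> > 0"
  shows "(\<forall>V\<in>admissible M B T N. \<forall>W\<in>admissible_delta M B T N Lap one X0 S \<delta>.
            integral\<^sup>L M (\<lambda>\<omega>. integral {0..T} (\<lambda>t.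
              inner (V t \<omega> - Rh M B T N Lap one X0 S \<delta> \<rho> V t \<omega>)
                    (W t \<omega> - Rh M B T N Lap one X0 S \<delta> \<rho> V t \<omega>))) \<le> 0)
       \<and> (\<forall>V\<in>admissible M B T N. \<forall>P\<in>admissible M B T N.
            integral {0..T} (\<lambda>t. integral\<^sup>L M (\<lambda>\<omega>.
              (norm (Rh M B T N Lap one X0 S \<delta> \<rho> V t \<omega> - Rh M B T N Lap one X0 S \<delta> \<rho> P t \<omega>))\<^sup>2))
          \<le> integral {0..T} (\<lambda>t. integral\<^sup>L M (\<lambda>\<omega>. (norm (V t \<omega> - P t \<omega>))\<^sup>2)))"
proof -
  interpret discrete_control_setting M B T N a Lap one X0 S
    using BM T N a_sym a_pos Lap_lin Lap_def S_adapted by (rule discrete_control_setting.intro)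
  have Qint_pos: "Qint > 0" using Qpos by (simp add: Qint_def)
  show ?thesis
    using Rh_variational_inequality[OF rho Qint_pos] Rh_nonexpansive[OF rho Qint_pos]
    by (auto simp: admissible_delta_def)
qed

end
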